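(* Let $n\ge3$, $m=n-1$, and consider $$(P):\ \sup\ x_{n-1}\ \text{ s.t. }\ x_1E_1+\sum_{i=2}^{n-2}x_i(E_i+E_{i-1,n})+x_{n-1}(-E_{n-1}+E_{n-2,n})\preceq I_{n-1}\oplus 0_1,$$ with dual $(D)$. Then $\operatorname{val}(P)=0$ and $(D)$ is infeasible, so $\operatorname{val}(D)=+\infty$.
   Context: $E_{ij}\in\mathcal S^n$ is the symmetric matrix whose only nonzero entries are $1$ in positions $(i,j)$ and $(j,i)$; $E_i:=E_{ii}$. For $(P)$: $\sup\{c^Tx:\sum_ix_iA_i\preceq B\}$ the dual is $(D)$: $\inf\{B\bullet Y:A_i\bullet Y=c_i\ \forall i,\ Y\succeq0\}$, $S\bullet T=\operatorname{trace}(ST)$, with $\inf\emptyset=+\infty$. *)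

theory Defs
  imports Complex_Main "HOL-Library.Extended_Real"
begin

text \<open>n x n real matrices are represented as functions nat => nat => real,
  indexed by {1..n} x {1..n}; entries outside this range are irrelevant.\<close>

definition Emat :: "nat \<Rightarrow> nat \<Rightarrow> nat \<Rightarrow> nat \<Rightarrow> real" where
  "Emat i j = (\<lambda>a b. if (a = i \<and> b = j) \<or> (a = j \<and> b = i) then 1 else 0)"

definition sym_mat :: "nat \<Rightarrow> (nat \<Rightarrow> nat \<Rightarrow> real) \<Rightarrow> bool" where
  "sym_mat n M \<longleftrightarrow> (\<forall>a\<in>{1..n}. \<forall>b\<in>{1..n}. M a b = M b a)"

definition psd :: "nat \<Rightarrow> (nat \<Rightarrow> nat \<Rightarrow> real) \<Rightarrow> bool" where
  "psd n M \<longleftrightarrow> sym_mat n M \<and>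
     (\<forall>v :: nat \<Rightarrow> real. 0 \<le> (\<Sum>a=1..n. \<Sum>b=1..n. v a * M a b * v b))"

definition loewner_le :: "nat \<Rightarrow> (nat \<Rightarrow> nat \<Rightarrow> real) \<Rightarrow> (nat \<Rightarrow> nat \<Rightarrow> real) \<Rightarrow> bool" where
  "loewner_le n A B \<longleftrightarrow> psd n (\<lambda>a b. B a b - A a b)"

definition frob :: "nat \<Rightarrow> (nat \<Rightarrow> nat \<Rightarrow> real) \<Rightarrow> (nat \<Rightarrow> nat \<Rightarrow> real) \<Rightarrow> real" where
  "frob n S T = (\<Sum>a=1..n. \<Sum>b=1..n. S a b * T b a)"

definition primal_feasible ::
  "nat \<Rightarrow> nat \<Rightarrow> (nat \<Rightarrow> nat \<Rightarrow> nat \<Rightarrow> real) \<Rightarrow> (nat \<Rightarrow> nat \<Rightarrow> real) \<Rightarrow> (nat \<Rightarrow> real) \<Rightarrow> bool" where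
  "primal_feasible n m A B x \<longleftrightarrow> loewner_le n (\<lambda>a b. \<Sum>i=1..m. x i * A i a b) B"

definition primal_val ::
  "nat \<Rightarrow> nat \<Rightarrow> (nat \<Rightarrow> nat \<Rightarrow> nat \<Rightarrow> real) \<Rightarrow> (nat \<Rightarrow> nat \<Rightarrow> real) \<Rightarrow> (nat \<Rightarrow> real) \<Rightarrow> ereal" where
  "primal_val n m A B c =
     Sup ((\<lambda>x. ereal (\<Sum>i=1..m. c i * x i)) ` {x. primal_feasible n m A B x})"

text \<open>Dual (D): inf B . Y s.t. A_i . Y = c_i, Y psd (symmetric); inf of empty set = +infinity.\<close>
definition dual_feasible ::
  "nat \<Rightarrow> nat \<Rightarrow> (nat \<Rightarrow> nat \<Rightarrow> nat \<Rightarrow> real) \<Rightarrow> (nat \<Rightarrow> real) \<Rightarrow> (nat \<Rightarrow> nat \<Rightarrow> real) \<Rightarrow> bool" where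
  "dual_feasible n m A c Y \<longleftrightarrow> (\<forall>i\<in>{1..m}. frob n (A i) Y = c i) \<and> psd n Y"

definition dual_val ::
  "nat \<Rightarrow> nat \<Rightarrow> (nat \<Rightarrow> nat \<Rightarrow> nat \<Rightarrow> real) \<Rightarrow> (nat \<Rightarrow> nat \<Rightarrow> real) \<Rightarrow> (nat \<Rightarrow> real) \<Rightarrow> ereal" where
  "dual_val n m A B c =
     Inf ((\<lambda>Y. ereal (frob n B Y)) ` {Y. dual_feasible n m A c Y})"

definition Aex :: "nat \<Rightarrow> nat \<Rightarrow> nat \<Rightarrow> nat \<Rightarrow> real" where
  "Aex n i =
     (if i = 1 then Emat 1 1
      else if 2 \<le> i \<and> i \<le> n - 2 then (\<lambda>a b. Emat i i a b + Emat (i - 1) n a b)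
      else if i = n - 1 then (\<lambda>a b. - Emat (n - 1) (n - 1) a b + Emat (n - 2) n a b)
      else (\<lambda>a b. 0))"

definition Bmat_ex :: "nat \<Rightarrow> nat \<Rightarrow> nat \<Rightarrow> real" where
  "Bmat_ex n = (\<lambda>a b. if a = b \<and> 1 \<le> a \<and> a \<le> n - 1 then 1 else 0)"

definition cex :: "nat \<Rightarrow> nat \<Rightarrow> real" where
  "cex n = (\<lambda>i. if i = n - 1 then 1 else 0)"

end

theory Submission imports Defs begin

text \<open>A zero diagonal entry of a positive semidefinite matrix kills its whole row. In the slack
  matrix of a primal solution the entry (n,n) vanishes, and the entry (n,n-2) is -x(n-1); so the
  objective is 0 on every feasible point. In a dual solution Y the constraint for i = 1 gives
  Y(1,1) = 0, hence Y(1,n) = 0; then the constraint for i gives Y(i,i) = 0 once Y(i-1,n) = 0, and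
  so on up to Y(n-2,n) = 0. The last constraint then reads -Y(n-1,n-1) = 1, impossible.\<close>

lemma quad_form_supported:
  fixes n :: nat and v :: "nat \<Rightarrow> 'a::comm_semiring_0"
  assumes "S \<subseteq> {1..n}" and "\<And>a. a \<in> {1..n} - S \<Longrightarrow> v a = 0"
  shows "(\<Sum>a=1..n. \<Sum>b=1..n. v a * M a b * v b) = (\<Sum>a\<in>S. \<Sum>b\<in>S. v a * M a b * v b)"
proof -
  have inner: "(\<Sum>b=1..n. v a * M a b * v b) = (\<Sum>b\<in>S. v a * M a b * v b)" for a
    using assms by (intro sum.mono_neutral_right) auto
  show ?thesis
    unfolding inner using assms by (intro sum.mono_neutral_right) auto
qed

lemma psd_diag_nonneg:
  assumes "psd n M" and "a \<in> {1..n}"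
  shows "0 \<le> M a a"
proof -
  define v :: "nat \<Rightarrow> real" where "v x = (if x = a then 1 else 0)" for x
  have "0 \<le> (\<Sum>i=1..n. \<Sum>j=1..n. v i * M i j * v j)"
    using assms(1) unfolding psd_def by blast
  also have "\<dots> = M a a"
    using quad_form_supported[of "{a}" n v M] assms(2) by (simp add: v_def)
  finally show ?thesis .
qed

lemma psd_zero_diag_imp_zero:
  assumes "psd n M" and "a \<in> {1..n}" "b \<in> {1..n}" and "M a a = 0"
  shows "M a b = 0"
proof (rule ccontr)
  assume nz: "M a b \<noteq> 0"
  with assms(4) have "a \<noteq> b" by auto
  have sym: "M b a = M a b"
    using assms(1-3) unfolding psd_def sym_mat_def by auto
  \<comment> \<open>On v = s e_a + e_b the form is 2 s M(a,b) + M(b,b), which is -1 for this s.\<close>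
  define s where "s = - (M b b + 1) / (2 * M a b)"
  define v :: "nat \<Rightarrow> real" where "v x = (if x = a then s else if x = b then 1 else 0)" for x
  have "0 \<le> (\<Sum>i=1..n. \<Sum>j=1..n. v i * M i j * v j)"
    using assms(1) unfolding psd_def by blast
  also have "\<dots> = s * M a a * s + s * M a b + M b a * s + M b b"
    using quad_form_supported[of "{a, b}" n v M] assms(2,3) \<open>a \<noteq> b\<close> by (simp add: v_def)
  also have "\<dots> = -1"
    using nz sym assms(4) by (simp add: s_def field_simps)
  finally show False by simp
qed

lemma psd_Bmat_ex: "psd n (Bmat_ex n)"
proof -
  have "(\<Sum>b=1..n. v a * Bmat_ex n a b * v b) = (if a \<le> n - 1 then v a * v a else 0)"
    if "a \<in> {1..n}" for v :: "nat \<Rightarrow> real" and a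
    using that by (simp add: Bmat_ex_def if_distrib if_distribR cong: if_cong)
  then show ?thesis
    unfolding psd_def sym_mat_def
    by (auto simp: Bmat_ex_def intro!: sum_nonneg)
qed

lemma frob_Emat:
  assumes "i \<in> {1..n}" "j \<in> {1..n}"
  shows "frob n (Emat i j) Y = (if i = j then Y i i else Y i j + Y j i)"
proof -
  have "Emat i j a b * Y b a = (if a = i then (if b = j then Y b a else 0) else 0)
      + (if a = j \<and> i \<noteq> j then (if b = i then Y b a else 0) else 0)" for a b
    unfolding Emat_def by auto
  then show ?thesis
    unfolding frob_def using assms by (simp add: sum.distrib sum.If_cases)
qed

lemma frob_add: "frob n (\<lambda>a b. S a b + T a b) Y = frob n S Y + frob n T Y"
  unfolding frob_def by (simp add: sum.distrib algebra_simps)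

lemma frob_uminus: "frob n (\<lambda>a b. - S a b) Y = - frob n S Y"
  unfolding frob_def by (simp add: sum_negf)

lemma frob_Aex_first:
  assumes "n \<ge> 1"
  shows "frob n (Aex n 1) Y = Y 1 1"
  using assms by (simp add: Aex_def frob_Emat)

lemma frob_Aex_middle:
  assumes "2 \<le> i" "i \<le> n - 2"
  shows "frob n (Aex n i) Y = Y i i + Y (i - 1) n + Y n (i - 1)"
proof -
  have "Aex n i = (\<lambda>a b. Emat i i a b + Emat (i - 1) n a b)"
    using assms by (simp add: Aex_def)
  moreover have "i - 1 \<in> {1..n}" "i - 1 \<noteq> n" "i \<in> {1..n}"
    using assms by auto
  ultimately show ?thesis
    using frob_Emat[of "i - 1" n n Y] frob_Emat[of i n i Y] by (simp add: frob_add)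
qed

lemma frob_Aex_last:
  assumes "n \<ge> 3"
  shows "frob n (Aex n (n - 1)) Y = - Y (n - 1) (n - 1) + Y (n - 2) n + Y n (n - 2)"
proof -
  have "n - 1 \<noteq> 1" "\<not> n - 1 \<le> n - 2"
    using assms by linarith+
  then have "Aex n (n - 1) = (\<lambda>a b. - Emat (n - 1) (n - 1) a b + Emat (n - 2) n a b)"
    unfolding Aex_def by auto
  moreover have "n - 2 \<in> {1..n}" "n - 2 \<noteq> n" "n - 1 \<in> {1..n}"
    using assms by auto
  ultimately show ?thesis
    using frob_Emat[of "n - 2" n n Y] frob_Emat[of "n - 1" n "n - 1" Y]
    by (simp only: frob_add frob_uminus) simp
qed

lemma sum_delta_last:
  fixes f :: "nat \<Rightarrow> 'a::comm_monoid_add"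
  assumes "1 \<le> m"
  shows "(\<Sum>i=1..m. if i = m then f i else 0) = f m"
  using assms by simp

lemma sum_cex:
  assumes "n \<ge> 2"
  shows "(\<Sum>i=1..n - 1. cex n i * x i) = x (n - 1)"
proof -
  have "(\<Sum>i=1..n - 1. cex n i * x i) = (\<Sum>i=1..n - 1. if i = n - 1 then x i else 0)"
    by (rule sum.cong) (auto simp: cex_def)
  also have "\<dots> = x (n - 1)"
    using assms by (intro sum_delta_last) linarith
  finally show ?thesis .
qed

lemma primal_feasible_objective_zero:
  assumes "n \<ge> 3" and "primal_feasible n (n - 1) (Aex n) (Bmat_ex n) x"
  shows "x (n - 1) = 0"
proof -
  define M where "M a b = Bmat_ex n a b - (\<Sum>i=1..n - 1. x i * Aex n i a b)" for a b
  have "psd n M"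
    using assms(2) unfolding primal_feasible_def loewner_le_def M_def by simp
  have "(\<Sum>i=1..n - 1. x i * Aex n i n n) = 0"
    by (rule sum.neutral) (auto simp: Aex_def Emat_def)
  then have "M n n = 0"
    using assms(1) by (simp add: M_def Bmat_ex_def)
  have "(\<Sum>i=1..n - 1. x i * Aex n i n (n - 2)) = (\<Sum>i=1..n - 1. if i = n - 1 then x i else 0)"
    using assms(1) by (intro sum.cong) (auto simp: Aex_def Emat_def)
  also have "\<dots> = x (n - 1)"
    using assms(1) by (intro sum_delta_last) linarith
  finally have "M n (n - 2) = - x (n - 1)"
    by (simp add: M_def Bmat_ex_def)
  with \<open>M n n = 0\<close> psd_zero_diag_imp_zero[OF \<open>psd n M\<close>, of n "n - 2"] assms(1) show ?thesis
    by simp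
qed

lemma primal_feasible_zero: "primal_feasible n m A (Bmat_ex n) (\<lambda>_. 0)"
  unfolding primal_feasible_def loewner_le_def using psd_Bmat_ex by simp

lemma dual_infeasible:
  assumes n: "n \<ge> 3"
  shows "\<not> dual_feasible n (n - 1) (Aex n) (cex n) Y"
proof
  assume "dual_feasible n (n - 1) (Aex n) (cex n) Y"
  then have "psd n Y" and constr: "\<And>i. i \<in> {1..n - 1} \<Longrightarrow> frob n (Aex n i) Y = cex n i"
    unfolding dual_feasible_def by blast+
  have sym: "Y a b = Y b a" if "a \<in> {1..n}" "b \<in> {1..n}" for a b
    using \<open>psd n Y\<close> that unfolding psd_def sym_mat_def by blast
  have column_zero: "Y k n = 0" if "1 \<le> k" "k \<le> n - 2" for k
    using that
  proof (induction k rule: nat_induct_at_least)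
    case base
    have "frob n (Aex n 1) Y = cex n 1"
      by (rule constr) (use n in auto)
    moreover have "1 \<noteq> n - 1"
      using n by linarith
    ultimately have "Y 1 1 = 0"
      using frob_Aex_first[of n Y] n by (simp add: cex_def)
    then show ?case
      using psd_zero_diag_imp_zero[OF \<open>psd n Y\<close>, of 1 n] n by simp
  next
    case (Suc k)
    have "Y k n = 0"
      using Suc.IH Suc.prems by simp
    moreover have "Y n k = Y k n"
      by (rule sym) (use Suc.hyps Suc.prems in auto)
    moreover have "frob n (Aex n (Suc k)) Y = cex n (Suc k)"
      by (rule constr) (use Suc.hyps Suc.prems in auto)
    ultimately have "Y (Suc k) (Suc k) = 0"
      using frob_Aex_middle[of "Suc k" n Y] Suc.hyps Suc.prems by (simp add: cex_def)
    then show ?case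
      using psd_zero_diag_imp_zero[OF \<open>psd n Y\<close>, of "Suc k" n] Suc.prems by simp
  qed
  have "Y (n - 2) n = 0"
    by (rule column_zero) (use n in auto)
  moreover have "Y n (n - 2) = Y (n - 2) n"
    by (rule sym) (use n in auto)
  moreover have "frob n (Aex n (n - 1)) Y = cex n (n - 1)"
    by (rule constr) (use n in auto)
  ultimately have "Y (n - 1) (n - 1) = -1"
    using frob_Aex_last[OF n, of Y] by (simp add: cex_def)
  moreover have "0 \<le> Y (n - 1) (n - 1)"
    by (rule psd_diag_nonneg[OF \<open>psd n Y\<close>]) (use n in auto)
  ultimately show False
    by linarith
qed

theorem mainTheorem7:
  fixes n :: nat
  assumes "n \<ge> 3"
  shows "primal_val n (n - 1) (Aex n) (Bmat_ex n) (cex n) = 0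
       \<and> \<not> (\<exists>Y. dual_feasible n (n - 1) (Aex n) (cex n) Y)
       \<and> dual_val n (n - 1) (Aex n) (Bmat_ex n) (cex n) = \<infinity>"
proof -
  define F where "F = {x. primal_feasible n (n - 1) (Aex n) (Bmat_ex n) x}"
  have "(\<lambda>_. 0) \<in> F"
    using primal_feasible_zero by (simp add: F_def)
  moreover have "ereal (\<Sum>i=1..n - 1. cex n i * x i) = 0" if "x \<in> F" for x
    using that assms sum_cex[of n x] primal_feasible_objective_zero[OF assms, of x]
    by (simp add: F_def)
  ultimately have primal_values: "(\<lambda>x. ereal (\<Sum>i=1..n - 1. cex n i * x i)) ` F = {0}"
    by auto
  have no_dual: "{Y. dual_feasible n (n - 1) (Aex n) (cex n) Y} = {}"
    using dual_infeasible[OF assms] by blast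
  show ?thesis
    unfolding primal_val_def dual_val_def F_def[symmetric] primal_values no_dual
    using dual_infeasible[OF assms] by (simp add: top_ereal_def)
qed

end
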